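(* Let $v\ge2$ and $M,N\in{\cal I}_v$ with $N=N_1+N_2$, where $N_1=\beta M$ for some $\beta\in\mathbb R$ and $M\perp N_2$ with respect to the scalar product $(x,y):=\mathrm{Re}(xy^* )$. Then $$[e^M,e^N]=2\,\frac{\sin|M|}{|M|}\,\frac{\sin|N|}{|N|}\,MN_2 .$$
   Context: ${\cal A}_v$ is the real Cayley-Dickson algebra of dimension $2^v$ (iterated doubling of $\mathbb R$; ${\cal A}_2=\mathbb H$), $z^*$ is conjugation, $\mathrm{Re}(z)=(z+z^* )/2$, $|z|=(zz^* )^{1/2}$, and ${\cal I}_v=\{z\in{\cal A}_v:\mathrm{Re}(z)=0\}$. For $M\in{\cal I}_v$, $e^M=\cos|M|+\frac{\sin|M|}{|M|}M$ (with $\frac{\sin|M|}{|M|}:=1$ when $M=0$). $[a,b]:=ab-ba$. *)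

theory Defs
  imports Complex_Main "HOL-Library.Function_Algebras"
begin

text \<open>Real Cayley-Dickson algebra A_v of dimension 2^v.  Elements are represented as
  coordinate functions nat => real that vanish at all indices >= 2^v.
  A_(v+1) = A_v x A_v, with the (a,b) pair stored as coordinates 0..2^v-1 (a) and
  2^v..2^(v+1)-1 (b).  Doubling convention:
  (a,b)(c,d) = (ac - d^* b, d a + b c^*),   (a,b)^* = (a^*, -b).\<close>

type_synonym cd = "nat \<Rightarrow> real"

definition cd_elem :: "nat \<Rightarrow> cd set" where
  "cd_elem v = {x. \<forall>i\<ge>2^v. x i = 0}"

definition cd_lo :: "nat \<Rightarrow> cd \<Rightarrow> cd" where
  "cd_lo v x = (\<lambda>i. if i < 2^v then x i else 0)"

definition cd_hi :: "nat \<Rightarrow> cd \<Rightarrow> cd" where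
  "cd_hi v x = (\<lambda>i. if i < 2^v then x (i + 2^v) else 0)"

definition cd_join :: "nat \<Rightarrow> cd \<Rightarrow> cd \<Rightarrow> cd" where
  "cd_join v a b = (\<lambda>i. if i < 2^v then a i else if i < 2^(Suc v) then b (i - 2^v) else 0)"

fun cd_conj :: "nat \<Rightarrow> cd \<Rightarrow> cd" where
  "cd_conj 0 x = (\<lambda>i. if i = 0 then x 0 else 0)"
| "cd_conj (Suc v) x = cd_join v (cd_conj v (cd_lo v x)) (- cd_hi v x)"

fun cd_mult :: "nat \<Rightarrow> cd \<Rightarrow> cd \<Rightarrow> cd" where
  "cd_mult 0 x y = (\<lambda>i. if i = 0 then x 0 * y 0 else 0)"
| "cd_mult (Suc v) x y =
     (let a = cd_lo v x; b = cd_hi v x; c = cd_lo v y; d = cd_hi v y in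
      cd_join v (cd_mult v a c - cd_mult v (cd_conj v d) b)
                (cd_mult v d a + cd_mult v b (cd_conj v c)))"

definition cd_one :: cd where
  "cd_one = (\<lambda>i. if i = 0 then 1 else 0)"

definition cd_scale :: "real \<Rightarrow> cd \<Rightarrow> cd" where
  "cd_scale c x = (\<lambda>i. c * x i)"

text \<open>Re(z) = (z + z^*)/2; this element is real (a multiple of 1), we take its real value.\<close>
definition cd_Re :: "nat \<Rightarrow> cd \<Rightarrow> real" where
  "cd_Re v z = (z + cd_conj v z) 0 / 2"

definition cd_norm :: "nat \<Rightarrow> cd \<Rightarrow> real" where
  "cd_norm v z = sqrt (cd_Re v (cd_mult v z (cd_conj v z)))"

definition cd_inner :: "nat \<Rightarrow> cd \<Rightarrow> cd \<Rightarrow> real" where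
  "cd_inner v x y = cd_Re v (cd_mult v x (cd_conj v y))"

definition cd_imag :: "nat \<Rightarrow> cd set" where
  "cd_imag v = {z \<in> cd_elem v. cd_Re v z = 0}"

definition sinc_cd :: "real \<Rightarrow> real" where
  "sinc_cd t = (if t = 0 then 1 else sin t / t)"

definition cd_exp :: "nat \<Rightarrow> cd \<Rightarrow> cd" where
  "cd_exp v M = cd_scale (cos (cd_norm v M)) cd_one + cd_scale (sinc_cd (cd_norm v M)) M"

definition cd_comm :: "nat \<Rightarrow> cd \<Rightarrow> cd \<Rightarrow> cd" where
  "cd_comm v a b = cd_mult v a b - cd_mult v b a"

end

theory Submission
  imports Defs
begin

(* Real multiples of 1 commute with everything and the product is bilinear, so
   [e^M, e^N] = sinc|M| sinc|N| [M, N] = sinc|M| sinc|N| [M, N2], as [M, beta M] = 0.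
   Orthogonality makes M N2 imaginary, hence N2 M = (M N2)^* = - M N2 and [M, N2] = 2 M N2.
   Besides bilinearity, the only algebraic input is (xy)^* = y^* x^*, which holds in
   every A_v by induction along the doubling. *)

lemma cd_conj_eq:
  "cd_conj v x = (\<lambda>i. if i = 0 then x 0 else if i < 2^v then - x i else 0)"
proof (induction v arbitrary: x)
  case 0
  then show ?case by (auto simp: fun_eq_iff)
next
  case (Suc v)
  have "(0::nat) < 2^v" by simp
  then show ?case
    by (auto simp: fun_eq_iff Suc cd_join_def cd_lo_def cd_hi_def)
qed

interpretation cd_lo: additive "cd_lo v"
  by standard (auto simp: cd_lo_def fun_eq_iff)

interpretation cd_hi: additive "cd_hi v"
  by standard (auto simp: cd_hi_def fun_eq_iff)

interpretation cd_conj: additive "cd_conj v"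
  by standard (auto simp: cd_conj_eq fun_eq_iff)

interpretation cd_scale: additive "cd_scale c"
  by standard (auto simp: cd_scale_def fun_eq_iff algebra_simps)

lemma cd_join_add: "cd_join v (a + c) (b + d) = cd_join v a b + cd_join v c d"
  by (auto simp: cd_join_def fun_eq_iff)

lemma cd_lo_scale: "cd_lo v (cd_scale c x) = cd_scale c (cd_lo v x)"
  by (auto simp: cd_lo_def cd_scale_def fun_eq_iff)

lemma cd_hi_scale: "cd_hi v (cd_scale c x) = cd_scale c (cd_hi v x)"
  by (auto simp: cd_hi_def cd_scale_def fun_eq_iff)

lemma cd_conj_scale: "cd_conj v (cd_scale c x) = cd_scale c (cd_conj v x)"
  by (auto simp: cd_conj_eq cd_scale_def fun_eq_iff)

lemma cd_join_scale: "cd_join v (cd_scale c a) (cd_scale c b) = cd_scale c (cd_join v a b)"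
  by (auto simp: cd_join_def cd_scale_def fun_eq_iff)

lemma cd_lo_cd_elem: "x \<in> cd_elem v \<Longrightarrow> cd_lo v x = x"
  by (auto simp: cd_elem_def cd_lo_def fun_eq_iff)

lemma cd_lo_idem: "cd_lo v (cd_lo v x) = cd_lo v x"
  by (auto simp: cd_lo_def fun_eq_iff)

lemma cd_lo_hi: "cd_lo v (cd_hi v x) = cd_hi v x"
  by (auto simp: cd_lo_def cd_hi_def fun_eq_iff)

lemma cd_lo_conj: "cd_lo v (cd_conj v x) = cd_conj v x"
  by (auto simp: cd_lo_def cd_conj_eq fun_eq_iff)

lemma cd_conj_lo: "cd_conj v (cd_lo v x) = cd_conj v x"
  by (auto simp: cd_lo_def cd_conj_eq fun_eq_iff)

lemma cd_conj_conj: "cd_conj v (cd_conj v x) = cd_lo v x"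
  by (auto simp: cd_lo_def cd_conj_eq fun_eq_iff)

lemma cd_lo_join: "cd_lo v (cd_join v a b) = cd_lo v a"
  by (auto simp: cd_lo_def cd_join_def fun_eq_iff)

lemma cd_hi_join: "cd_hi v (cd_join v a b) = cd_lo v b"
  by (auto simp: cd_lo_def cd_hi_def cd_join_def fun_eq_iff)

lemma cd_join_lo_hi: "cd_join v (cd_lo v x) (cd_hi v x) = cd_lo (Suc v) x"
  by (auto simp: cd_lo_def cd_hi_def cd_join_def fun_eq_iff)

lemma cd_join_in_cd_elem: "cd_join v a b \<in> cd_elem (Suc v)"
  by (auto simp: cd_join_def cd_elem_def)

lemma cd_mult_in_cd_elem: "cd_mult v x y \<in> cd_elem v"
  by (cases v) (simp_all add: Let_def cd_join_in_cd_elem, simp add: cd_elem_def)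

lemma cd_lo_mult: "cd_lo v (cd_mult v x y) = cd_mult v x y"
  by (rule cd_lo_cd_elem[OF cd_mult_in_cd_elem])

lemma cd_mult_add:
  "cd_mult v (x + y) z = cd_mult v x z + cd_mult v y z \<and>
   cd_mult v z (x + y) = cd_mult v z x + cd_mult v z y"
proof (induction v arbitrary: x y z)
  case 0
  then show ?case by (auto simp: fun_eq_iff algebra_simps)
next
  case (Suc v)
  show ?case
    unfolding cd_mult.simps Let_def cd_lo.add cd_hi.add cd_conj.add
      Suc.IH [THEN conjunct1] Suc.IH [THEN conjunct2] cd_join_add [symmetric]
    by (intro conjI arg_cong2 [where f = "cd_join v"]) (simp_all add: algebra_simps)
qed

interpretation cd_mult_left: additive "\<lambda>x. cd_mult v x z"
  by standard (simp add: cd_mult_add)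

interpretation cd_mult_right: additive "\<lambda>x. cd_mult v z x"
  by standard (simp add: cd_mult_add)

lemma cd_mult_scale:
  "cd_mult v (cd_scale c x) z = cd_scale c (cd_mult v x z) \<and>
   cd_mult v z (cd_scale c x) = cd_scale c (cd_mult v z x)"
proof (induction v arbitrary: x z)
  case 0
  then show ?case by (auto simp: fun_eq_iff algebra_simps cd_scale_def)
next
  case (Suc v)
  show ?case
    unfolding cd_mult.simps Let_def cd_lo_scale cd_hi_scale cd_conj_scale
      Suc.IH [THEN conjunct1] Suc.IH [THEN conjunct2]
      cd_join_scale [symmetric] cd_scale.add cd_scale.diff
    by simp
qed

lemma cd_mult_one: "cd_mult v cd_one x = cd_lo v x \<and> cd_mult v x cd_one = cd_lo v x"
proof (induction v arbitrary: x)
  case 0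
  then show ?case by (auto simp: fun_eq_iff cd_lo_def cd_one_def)
next
  case (Suc v)
  have "cd_lo v cd_one = cd_one" "cd_hi v cd_one = 0" "cd_conj v cd_one = cd_one"
    by (auto simp: cd_lo_def cd_hi_def cd_conj_eq cd_one_def fun_eq_iff)
  then show ?case
    unfolding cd_mult.simps Let_def
    by (simp add: Suc.IH cd_conj.zero cd_mult_left.zero cd_mult_right.zero cd_lo_idem cd_lo_hi
        cd_join_lo_hi)
qed

lemma cd_conj_mult: "cd_conj v (cd_mult v x y) = cd_mult v (cd_conj v y) (cd_conj v x)"
proof (induction v arbitrary: x y)
  case 0
  then show ?case by (auto simp: fun_eq_iff)
next
  case (Suc v)
  show ?case
    unfolding cd_mult.simps Let_def cd_conj.simps cd_lo_join cd_hi_join cd_conj_lo cd_lo.add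
      cd_lo_mult cd_lo_conj cd_lo.minus cd_lo_hi cd_conj.diff Suc.IH cd_conj_conj
      cd_mult_left.minus cd_mult_right.minus cd_conj.minus
    by (simp add: algebra_simps)
qed

lemma cd_Re_eq: "cd_Re v z = z 0"
  by (simp add: cd_Re_def cd_conj_eq)

lemma cd_conj_imag: "z \<in> cd_imag v \<Longrightarrow> cd_conj v z = - z"
  by (auto simp: cd_imag_def cd_elem_def cd_Re_eq cd_conj_eq fun_eq_iff)

lemma cd_conj_eq_minus_iff: "z \<in> cd_elem v \<Longrightarrow> cd_conj v z = - z \<longleftrightarrow> z 0 = 0"
  by (auto simp: cd_elem_def cd_conj_eq fun_eq_iff)

lemma cd_imag_diff_scale:
  "x \<in> cd_imag v \<Longrightarrow> y \<in> cd_imag v \<Longrightarrow> x - cd_scale c y \<in> cd_imag v"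
  by (auto simp: cd_imag_def cd_elem_def cd_Re_eq cd_scale_def)

lemma cd_imag_anticomm:
  assumes x: "x \<in> cd_imag v" and y: "y \<in> cd_imag v" and orth: "cd_inner v x y = 0"
  shows "cd_mult v y x = - cd_mult v x y"
proof -
  have "cd_mult v x y 0 = 0"
    using orth by (simp add: cd_inner_def cd_Re_eq cd_conj_imag [OF y] cd_mult_right.minus)
  then have "cd_conj v (cd_mult v x y) = - cd_mult v x y"
    using cd_conj_eq_minus_iff cd_mult_in_cd_elem by blast
  moreover have "cd_conj v (cd_mult v x y) = cd_mult v y x"
    by (simp add: cd_conj_mult cd_conj_imag [OF x] cd_conj_imag [OF y]
        cd_mult_left.minus cd_mult_right.minus)
  ultimately show ?thesis by simp
qed

lemma cd_comm_scalar_add: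
  assumes "x \<in> cd_elem v" "y \<in> cd_elem v"
  shows "cd_comm v (cd_scale a cd_one + cd_scale b x) (cd_scale c cd_one + cd_scale d y) =
         cd_scale (b * d) (cd_comm v x y)"
  using assms cd_mult_one [of v] cd_mult_scale [of v]
  by (simp add: cd_comm_def cd_mult_add cd_lo_cd_elem cd_lo_def cd_scale_def fun_eq_iff
      algebra_simps)

theorem lemma9:
  fixes v :: nat and M N N1 N2 :: cd and \<beta> :: real
  assumes "v \<ge> 2"
    and "M \<in> cd_imag v" and "N \<in> cd_imag v"
    and "N = N1 + N2"
    and "N1 = cd_scale \<beta> M"
    and "cd_inner v M N2 = 0"
  shows "cd_comm v (cd_exp v M) (cd_exp v N) =
         cd_scale (2 * sinc_cd (cd_norm v M) * sinc_cd (cd_norm v N)) (cd_mult v M N2)"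
proof -
  have "N2 \<in> cd_imag v"
    using cd_imag_diff_scale [OF assms(3,2), of \<beta>] assms(4,5) by simp
  have "M \<in> cd_elem v" "N \<in> cd_elem v"
    using assms(2,3) by (simp_all add: cd_imag_def)
  then have "cd_comm v (cd_exp v M) (cd_exp v N) =
      cd_scale (sinc_cd (cd_norm v M) * sinc_cd (cd_norm v N)) (cd_comm v M N)"
    unfolding cd_exp_def by (rule cd_comm_scalar_add)
  also have "cd_comm v M N = cd_comm v M N2"
    using assms(4,5) cd_mult_scale [of v] by (simp add: cd_comm_def cd_mult_add)
  also have "\<dots> = cd_scale 2 (cd_mult v M N2)"
    using cd_imag_anticomm [OF assms(2) \<open>N2 \<in> cd_imag v\<close> assms(6)]
    by (simp add: cd_comm_def cd_scale_def fun_eq_iff)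
  finally show ?thesis
    by (simp add: cd_scale_def fun_eq_iff)
qed

end
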